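(* Let $p>1$ and $q>1$ be real numbers with $\frac1p+\frac1q=1$. For nonnegative random variables $X,Y$ defined on a common probability space with $\|X\|_p+\|Y\|_p+\|Y\|_q<\infty$, and for $\vartheta\in[0,1]$, define $$\mathcal{E}_{p,\vartheta}(X):=\big(\|X\|_p^p-\vartheta^p\|X\|_1^p\big)^{1/p},\qquad \mathcal{C}_{p,\vartheta}(X,Y):=\mathbb{E}X^{p-1}Y-\vartheta^p(\mathbb{E}X)^{p-1}\,\mathbb{E}Y.$$ (a) If $p\le 2$ (so $1<p\le2$), then for all $\vartheta\in[0,1]$ and all such $X,Y$, $$\mathcal{E}_{p,\vartheta}(X+Y)\le\mathcal{E}_{p,\vartheta}(X)+\mathcal{E}_{p,\vartheta}(Y)$$ and $$\mathcal{C}_{p,\vartheta}(X,Y)\le\mathcal{E}_{p,\vartheta}(X)^{p-1}\,\mathcal{E}_{p,\vartheta}(Y).$$ (b) For any real $p>2$ and any $\vartheta\in(0,1]$, neither of these two inequalities holds in general: there exist such nonnegative $X,Y$ for which the first inequality fails, and there exist such nonnegative $X,Y$ for which the second inequality fails.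
   Context: $\|X\|_r:=(\mathbb{E}|X|^r)^{1/r}$. The quantity $\mathcal{E}_{p,\vartheta}(X)$ is well defined (the expression under the $p$th root is nonnegative) since $\|X\|_1\le\|X\|_p$. For $\vartheta=0$ the two inequalities reduce to the Minkowski and Hölder inequalities, and for $\vartheta=1$, $\mathcal{E}_{p,1}(X)=(\|X\|_p^p-\|X\|_1^p)^{1/p}$ is the "$p$-excess" of $X$. *)

theory Defs
  imports "HOL-Probability.Probability"
begin

definition Lnorm :: "'a measure \<Rightarrow> real \<Rightarrow> ('a \<Rightarrow> real) \<Rightarrow> real" where
  "Lnorm M r X = (\<integral>x. \<bar>X x\<bar> powr r \<partial>M) powr (1 / r)"

definition Lnorm_finite :: "'a measure \<Rightarrow> real \<Rightarrow> ('a \<Rightarrow> real) \<Rightarrow> bool" where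
  "Lnorm_finite M r X \<longleftrightarrow> X \<in> borel_measurable M \<and>
     (\<integral>\<^sup>+ x. ennreal (\<bar>X x\<bar> powr r) \<partial>M) < \<infinity>"

definition Exc :: "'a measure \<Rightarrow> real \<Rightarrow> real \<Rightarrow> ('a \<Rightarrow> real) \<Rightarrow> real" where
  "Exc M p \<theta> X = (Lnorm M p X powr p - \<theta> powr p * Lnorm M 1 X powr p) powr (1 / p)"

definition Cov :: "'a measure \<Rightarrow> real \<Rightarrow> real \<Rightarrow> ('a \<Rightarrow> real) \<Rightarrow> ('a \<Rightarrow> real) \<Rightarrow> real" where
  "Cov M p \<theta> X Y = (\<integral>x. X x powr (p - 1) * Y x \<partial>M)
      - \<theta> powr p * (\<integral>x. X x \<partial>M) powr (p - 1) * (\<integral>x. Y x \<partial>M)"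

definition admissible :: "'a measure \<Rightarrow> real \<Rightarrow> real \<Rightarrow> ('a \<Rightarrow> real) \<Rightarrow> ('a \<Rightarrow> real) \<Rightarrow> bool" where
  "admissible M p q X Y \<longleftrightarrow> prob_space M \<and>
     (\<forall>x\<in>space M. X x \<ge> 0 \<and> Y x \<ge> 0) \<and>
     Lnorm_finite M p X \<and> Lnorm_finite M p Y \<and> Lnorm_finite M q Y"

end

theory Submission
  imports Defs
begin

text \<open>Write \<open>E\<close> and \<open>C\<close> for \<open>Exc M p \<theta>\<close> and \<open>Cov M p \<theta>\<close>. For \<open>1 < p \<le> 2\<close> the Bregman
  divergence \<open>D(y, x) = y^p - x^p - p x^(p-1) (y - x)\<close> of \<open>t^p\<close> is jointly convex (its Hessian
  has nonnegative determinant by weighted AM-GM), so Jensen's inequality bounds \<open>D\<close> at the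
  means by the mean of \<open>D(Y, X)\<close>. As \<open>D \<ge> 0\<close> and \<open>\<theta>^p \<le> 1\<close>, this is the Young-type bound
  \<open>p C(X, Y) \<le> E(Y)^p + (p - 1) E(X)^p\<close>, and optimising over rescalings of \<open>Y\<close> gives
  \<open>C(X, Y) \<le> E(X)^(p-1) E(Y)\<close>. Minkowski follows as usual from
  \<open>E(X + Y)^p = C(X + Y, X) + C(X + Y, Y)\<close>.

  For \<open>p > 2\<close> take \<open>X = (1, 0)\<close> and \<open>Y = (1, \<epsilon>)\<close> on a uniform two-point space: the
  Jensen gap of \<open>Y\<close> is of order \<open>\<epsilon>^2\<close> while its \<open>p\<close>-th moment only gains \<open>\<epsilon>^p\<close>, so the
  covariance inequality fails for small \<open>\<epsilon>\<close>; comparing derivatives at \<open>t = 0\<close> then shows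
  that the triangle inequality fails for \<open>X\<close> and \<open>t Y\<close> with \<open>t\<close> small.\<close>

definition bregman_powr :: "real \<Rightarrow> real \<Rightarrow> real \<Rightarrow> real" where
  "bregman_powr p y x = y powr p + (p - 1) * x powr p - p * (x powr (p - 1) * y)"

lemma bregman_powr_nonneg:
  fixes p x y :: real
  assumes p: "p > 1" and x: "x \<ge> 0" and y: "y \<ge> 0"
  shows "0 \<le> bregman_powr p y x"
proof -
  define q where "q = p / (p - 1)"
  have q: "q > 1" "1/p + 1/q = 1" using p by (auto simp: q_def field_simps)
  have "y * x powr (p - 1) \<le> y powr p / p + (x powr (p - 1)) powr q / q"
    using Youngs_inequality[OF p q y] x by simp
  also have "(x powr (p - 1)) powr q = x powr p"
    using p by (simp add: powr_powr q_def)
  finally have "p * (y * x powr (p - 1)) \<le> p * (y powr p / p + x powr p / q)"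
    using p by (intro mult_left_mono) auto
  also have "\<dots> = y powr p + (p - 1) * x powr p"
    using p by (simp add: q_def field_simps)
  finally show ?thesis by (simp add: bregman_powr_def mult_ac)
qed

lemma powr_Bernoulli_inequality:
  fixes r z :: real
  assumes r: "r \<ge> 1" and z: "z \<ge> -1"
  shows "1 + r * z \<le> (1 + z) powr r"
proof (cases "r = 1")
  case False
  then have "0 \<le> bregman_powr r (1 + z) 1"
    using r z by (intro bregman_powr_nonneg) auto
  then show ?thesis by (simp add: bregman_powr_def algebra_simps)
qed (use z in simp)

lemma powr_Bernoulli_inequality_second_order:
  fixes p e :: real
  assumes p: "p \<ge> 2" and e: "e \<ge> 0"
  shows "1 + p * e + p * (p - 1) / 2 * e\<^sup>2 \<le> (1 + e) powr p"
proof -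
  define f where "f t = (1 + t) powr p - p * t - p * (p - 1) / 2 * t\<^sup>2" for t :: real
  have "f 0 \<le> f e"
  proof (rule DERIV_nonneg_imp_increasing_open[OF e])
    fix t :: real assume t: "0 < t" "t < e"
    have "DERIV f t :> p * ((1 + t) powr (p - 1) - (1 + (p - 1) * t))"
      unfolding f_def using t
      by (auto intro!: derivative_eq_intros simp: power2_eq_square field_simps)
    moreover have "1 + (p - 1) * t \<le> (1 + t) powr (p - 1)"
      using p t by (intro powr_Bernoulli_inequality) auto
    ultimately show "\<exists>y. DERIV f t :> y \<and> y \<ge> 0"
      using p by (intro exI[of _ "p * ((1 + t) powr (p - 1) - (1 + (p - 1) * t))"]) auto
  qed (auto simp: f_def intro!: continuous_intros)
  then show ?thesis by (simp add: f_def)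
qed

lemma psd_quadratic_form_nonneg:
  fixes A B C u v :: real
  assumes "A > 0" and "B\<^sup>2 \<le> A * C"
  shows "0 \<le> A * u\<^sup>2 - 2 * B * u * v + C * v\<^sup>2"
proof -
  have "A * (A * u\<^sup>2 - 2 * B * u * v + C * v\<^sup>2) = (A * u - B * v)\<^sup>2 + (A * C - B\<^sup>2) * v\<^sup>2"
    by (simp add: power2_eq_square algebra_simps)
  also have "\<dots> \<ge> 0" using assms by (intro add_nonneg_nonneg mult_nonneg_nonneg) auto
  finally show ?thesis using assms(1) by (simp add: zero_le_mult_iff)
qed

text \<open>Weighted AM-GM with weights \<open>p - 1\<close> and \<open>2 - p\<close>: this is where \<open>p \<le> 2\<close> is needed.\<close>
lemma bregman_powr_hessian_det_nonneg:
  fixes p x y :: real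
  assumes p: "1 < p" "p \<le> 2" and x: "x > 0" and y: "y > 0"
  shows "(x powr (p - 2))\<^sup>2 \<le> y powr (p - 2) * ((p - 1) * x powr (p - 2) - (p - 2) * (x powr (p - 3) * y))"
proof -
  define A where "A = y powr (p - 2) * x powr (p - 2)"
  define B where "B = y powr (p - 1) * x powr (p - 3)"
  have "A powr (p - 1) * B powr (2 - p) \<le> (p - 1) * A + (2 - p) * B"
    using p x y by (intro Youngs_inequality_0) (auto simp: A_def B_def)
  also have "A powr (p - 1) * B powr (2 - p)
      = y powr ((p - 2) * (p - 1) + (p - 1) * (2 - p)) * x powr ((p - 2) * (p - 1) + (p - 3) * (2 - p))"
    using x y by (simp add: A_def B_def powr_mult powr_powr powr_add mult_ac)
  also have "\<dots> = (x powr (p - 2))\<^sup>2"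
    using x y by (simp add: power2_eq_square algebra_simps flip: powr_add)
  also have "(p - 1) * A + (2 - p) * B
      = y powr (p - 2) * ((p - 1) * x powr (p - 2) - (p - 2) * (x powr (p - 3) * y))"
  proof -
    have "y powr (p - 1) = y * y powr (p - 2)" using y powr_mult_base[of y "p - 2"] by simp
    then show ?thesis by (simp add: A_def B_def algebra_simps)
  qed
  finally show ?thesis .
qed

lemma above_tangent_if_DERIV2_nonneg:
  fixes f f' f'' :: "real \<Rightarrow> real"
  assumes cont: "continuous_on {0..1} f"
    and f': "\<And>t. 0 \<le> t \<Longrightarrow> t < 1 \<Longrightarrow> (f has_real_derivative f' t) (at t)"
    and f'': "\<And>t. 0 \<le> t \<Longrightarrow> t < 1 \<Longrightarrow> (f' has_real_derivative f'' t) (at t)"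
    and f''_nonneg: "\<And>t. 0 \<le> t \<Longrightarrow> t < 1 \<Longrightarrow> f'' t \<ge> 0"
  shows "f 0 + f' 0 \<le> f 1"
proof -
  have f'_mono: "f' 0 \<le> f' t" if t: "0 \<le> t" "t < 1" for t
  proof (rule DERIV_nonneg_imp_increasing_open[OF t(1)])
    show "\<exists>y. DERIV f' s :> y \<and> y \<ge> 0" if "0 < s" "s < t" for s
      using f'' f''_nonneg that t by (meson less_imp_le less_trans)
    show "continuous_on {0..t} f'"
      using f'' t by (intro DERIV_continuous_on[of _ _ f'']) (auto intro: has_field_derivative_at_within)
  qed
  define g where "g t = f t - t * f' 0" for t
  have "g 0 \<le> g 1"
  proof (rule DERIV_nonneg_imp_increasing_open[of 0 1 g])
    show "\<exists>y. DERIV g s :> y \<and> y \<ge> 0" if "0 < s" "s < 1" for s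
      using that f'[of s] f'_mono[of s] unfolding g_def
      by (intro exI[of _ "f' s - f' 0"]) (auto intro!: derivative_eq_intros)
    show "continuous_on {0..1} g" unfolding g_def by (intro continuous_intros cont)
  qed simp
  then show ?thesis by (simp add: g_def)
qed

text \<open>Joint convexity of \<open>bregman_powr\<close> for \<open>p \<le> 2\<close>, as the supporting hyperplane inequality at
  \<open>(b, a)\<close>; proved along the segment from \<open>(b, a)\<close> to \<open>(y, x)\<close>.\<close>
lemma bregman_powr_above_tangent:
  fixes p a b x y :: real
  assumes p: "1 < p" "p \<le> 2" and a: "a > 0" and b: "b > 0" and x: "x \<ge> 0" and y: "y \<ge> 0"
  shows "bregman_powr p b a + p * (b powr (p - 1) - a powr (p - 1)) * (y - b)
           + p * (p - 1) * (a powr (p - 1) - a powr (p - 2) * b) * (x - a) \<le> bregman_powr p y x"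
proof -
  define yt where "yt t = b + t * (y - b)" for t :: real
  define xt where "xt t = a + t * (x - a)" for t :: real
  define f where "f t = bregman_powr p (yt t) (xt t)" for t
  define f' where "f' t = (y - b) * (p * yt t powr (p - 1) - p * xt t powr (p - 1))
      + (x - a) * (p * (p - 1) * xt t powr (p - 1) - p * (p - 1) * (xt t powr (p - 2) * yt t))" for t
  define f'' where "f'' t = p * (p - 1) * (yt t powr (p - 2) * (y - b)\<^sup>2
      - 2 * xt t powr (p - 2) * (y - b) * (x - a)
      + ((p - 1) * xt t powr (p - 2) - (p - 2) * (xt t powr (p - 3) * yt t)) * (x - a)\<^sup>2)" for t
  have exps: "p - 1 - 1 = p - 2" "p - 2 - 1 = p - 3" by simp_all
  have yt_eq: "yt t = (1 - t) * b + t * y" and xt_eq: "xt t = (1 - t) * a + t * x" for t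
    by (simp_all add: yt_def xt_def algebra_simps)
  have pos: "yt t > 0" "xt t > 0" if "0 \<le> t" "t < 1" for t
    unfolding yt_eq xt_eq using that a b x y
    by (auto intro!: add_pos_nonneg)
  have dy: "(yt has_real_derivative (y - b)) (at t)" and dx: "(xt has_real_derivative (x - a)) (at t)" for t
    unfolding yt_def xt_def by (auto intro!: derivative_eq_intros)
  have "f 0 + f' 0 \<le> f 1"
  proof (rule above_tangent_if_DERIV2_nonneg)
    have "continuous_on {0..1} yt" "continuous_on {0..1} xt"
      unfolding yt_def xt_def by (intro continuous_intros)+
    moreover have "\<forall>t\<in>{0..1}. yt t \<ge> 0" "\<forall>t\<in>{0..1}. xt t \<ge> 0"
      unfolding yt_eq xt_eq using a b x y by auto
    ultimately show "continuous_on {0..1} f" unfolding f_def bregman_powr_def using p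
      by (intro continuous_intros continuous_on_powr') auto
  next
    fix t :: real assume t: "0 \<le> t" "t < 1"
    show "(f has_real_derivative f' t) (at t)"
      unfolding f_def f'_def bregman_powr_def
      by (rule derivative_eq_intros dy dx pos[OF t] refl)+ (simp add: exps algebra_simps)
    show "(f' has_real_derivative f'' t) (at t)"
      unfolding f'_def f''_def
      by (rule derivative_eq_intros dy dx pos[OF t] refl)+ (simp add: exps algebra_simps power2_eq_square)
    have "0 \<le> yt t powr (p - 2) * (y - b)\<^sup>2 - 2 * xt t powr (p - 2) * (y - b) * (x - a)
        + ((p - 1) * xt t powr (p - 2) - (p - 2) * (xt t powr (p - 3) * yt t)) * (x - a)\<^sup>2"
      using pos[OF t] p
      by (intro psd_quadratic_form_nonneg bregman_powr_hessian_det_nonneg) auto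
    then show "f'' t \<ge> 0" unfolding f''_def using p by simp
  qed
  then show ?thesis
    by (simp add: f_def f'_def yt_def xt_def algebra_simps)
qed

lemma (in finite_measure) integrable_of_integrable_powr:
  fixes X :: "'a \<Rightarrow> real"
  assumes p: "p \<ge> 1" and X: "X \<in> borel_measurable M" "\<And>\<omega>. \<omega> \<in> space M \<Longrightarrow> X \<omega> \<ge> 0"
    and int: "integrable M (\<lambda>\<omega>. X \<omega> powr p)"
  shows "integrable M X"
proof (rule Bochner_Integration.integrable_bound[where f = "\<lambda>\<omega>. 1 + X \<omega> powr p"])
  show "integrable M (\<lambda>\<omega>. 1 + X \<omega> powr p)" using int by simp
  have "X \<omega> \<le> 1 + X \<omega> powr p" for \<omega>
  proof (cases "X \<omega> \<le> 1")
    case False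
    then have "X \<omega> powr 1 \<le> X \<omega> powr p" using p by (intro powr_mono) auto
    then show ?thesis using False by simp
  qed (simp add: add_increasing2)
  then show "AE \<omega> in M. norm (X \<omega>) \<le> norm (1 + X \<omega> powr p)"
    using X(2) by (intro AE_I2) (simp add: add_nonneg_nonneg)
qed (fact X(1))

lemma integrable_powr_mult:
  fixes X Y :: "'a \<Rightarrow> real"
  assumes p: "p > 1" and meas: "X \<in> borel_measurable M" "Y \<in> borel_measurable M"
    and nonneg: "\<And>\<omega>. \<omega> \<in> space M \<Longrightarrow> X \<omega> \<ge> 0 \<and> Y \<omega> \<ge> 0"
    and int: "integrable M (\<lambda>\<omega>. X \<omega> powr p)" "integrable M (\<lambda>\<omega>. Y \<omega> powr p)"
  shows "integrable M (\<lambda>\<omega>. X \<omega> powr (p - 1) * Y \<omega>)"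
proof (rule Bochner_Integration.integrable_bound[where f = "\<lambda>\<omega>. Y \<omega> powr p + (p - 1) * X \<omega> powr p"])
  show "integrable M (\<lambda>\<omega>. Y \<omega> powr p + (p - 1) * X \<omega> powr p)" using int by simp
  show "(\<lambda>\<omega>. X \<omega> powr (p - 1) * Y \<omega>) \<in> borel_measurable M" using meas by measurable
  have "norm (X \<omega> powr (p - 1) * Y \<omega>) \<le> norm (Y \<omega> powr p + (p - 1) * X \<omega> powr p)"
    if "\<omega> \<in> space M" for \<omega>
  proof -
    have "0 \<le> X \<omega> powr (p - 1) * Y \<omega>" "0 \<le> bregman_powr p (Y \<omega>) (X \<omega>)"
      using nonneg[OF that] p by (auto intro: bregman_powr_nonneg)
    moreover have "X \<omega> powr (p - 1) * Y \<omega> \<le> p * (X \<omega> powr (p - 1) * Y \<omega>)"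
      using calculation(1) p by (simp add: mult_le_cancel_right1)
    ultimately show ?thesis by (simp add: bregman_powr_def)
  qed
  then show "AE \<omega> in M. norm (X \<omega> powr (p - 1) * Y \<omega>) \<le> norm (Y \<omega> powr p + (p - 1) * X \<omega> powr p)"
    by (intro AE_I2)
qed

lemma integrable_bregman_powr:
  fixes X Y :: "'a \<Rightarrow> real"
  assumes p: "p > 1" and meas: "X \<in> borel_measurable M" "Y \<in> borel_measurable M"
    and nonneg: "\<And>\<omega>. \<omega> \<in> space M \<Longrightarrow> X \<omega> \<ge> 0 \<and> Y \<omega> \<ge> 0"
    and int: "integrable M (\<lambda>\<omega>. X \<omega> powr p)" "integrable M (\<lambda>\<omega>. Y \<omega> powr p)"
  shows "integrable M (\<lambda>\<omega>. bregman_powr p (Y \<omega>) (X \<omega>))"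
  using int integrable_powr_mult[OF assms] by (simp add: bregman_powr_def)

lemma integral_bregman_powr:
  fixes X Y :: "'a \<Rightarrow> real"
  assumes p: "p > 1" and meas: "X \<in> borel_measurable M" "Y \<in> borel_measurable M"
    and nonneg: "\<And>\<omega>. \<omega> \<in> space M \<Longrightarrow> X \<omega> \<ge> 0 \<and> Y \<omega> \<ge> 0"
    and int: "integrable M (\<lambda>\<omega>. X \<omega> powr p)" "integrable M (\<lambda>\<omega>. Y \<omega> powr p)"
  shows "(\<integral>\<omega>. bregman_powr p (Y \<omega>) (X \<omega>) \<partial>M)
    = (\<integral>\<omega>. Y \<omega> powr p \<partial>M) + (p - 1) * (\<integral>\<omega>. X \<omega> powr p \<partial>M) - p * (\<integral>\<omega>. X \<omega> powr (p - 1) * Y \<omega> \<partial>M)"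
  using int integrable_powr_mult[OF assms] by (simp add: bregman_powr_def)

lemma (in prob_space) powr_integral_le_integral_powr:
  fixes X :: "'a \<Rightarrow> real"
  assumes p: "p > 1" and X: "X \<in> borel_measurable M" "\<And>\<omega>. \<omega> \<in> space M \<Longrightarrow> X \<omega> \<ge> 0"
    and int: "integrable M (\<lambda>\<omega>. X \<omega> powr p)"
  shows "(\<integral>\<omega>. X \<omega> \<partial>M) powr p \<le> (\<integral>\<omega>. X \<omega> powr p \<partial>M)"
proof -
  define a where "a = (\<integral>\<omega>. X \<omega> \<partial>M)"
  have a: "a \<ge> 0" using X(2) by (simp add: a_def)
  have int1: "integrable M X" using p by (intro integrable_of_integrable_powr[OF _ X int]) auto
  \<comment> \<open>integrate the tangent line inequality for \<open>t powr p\<close> at the mean\<close>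
  have "0 \<le> (\<integral>\<omega>. bregman_powr p (X \<omega>) a \<partial>M)"
    using p a X(2) by (intro integral_nonneg_AE AE_I2 bregman_powr_nonneg) auto
  also have "\<dots> = (\<integral>\<omega>. X \<omega> powr p \<partial>M) + (p - 1) * a powr p - p * (a powr (p - 1) * a)"
    using int int1 by (simp add: bregman_powr_def prob_space flip: a_def)
  also have "a powr (p - 1) * a = a powr p"
    using powr_mult_base[OF a, of "p - 1"] by (simp add: mult.commute)
  finally show ?thesis by (simp add: a_def algebra_simps)
qed

definition Exc_pow :: "'a measure \<Rightarrow> real \<Rightarrow> real \<Rightarrow> ('a \<Rightarrow> real) \<Rightarrow> real" where
  "Exc_pow M p \<theta> X = (\<integral>x. X x powr p \<partial>M) - \<theta> powr p * (\<integral>x. X x \<partial>M) powr p"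

lemma Exc_eq_Exc_pow:
  fixes X :: "'a \<Rightarrow> real"
  assumes p: "p > 0" and nonneg: "\<And>\<omega>. \<omega> \<in> space M \<Longrightarrow> X \<omega> \<ge> 0"
  shows "Exc M p \<theta> X = Exc_pow M p \<theta> X powr (1 / p)"
proof -
  have "(\<integral>\<omega>. \<bar>X \<omega>\<bar> powr r \<partial>M) = (\<integral>\<omega>. X \<omega> powr r \<partial>M)" for r
    using nonneg by (intro Bochner_Integration.integral_cong) auto
  moreover have "(\<integral>\<omega>. \<bar>X \<omega>\<bar> \<partial>M) = (\<integral>\<omega>. X \<omega> \<partial>M)"
    using nonneg by (intro Bochner_Integration.integral_cong) auto
  moreover have "(\<integral>\<omega>. X \<omega> powr p \<partial>M) \<ge> 0" "(\<integral>\<omega>. X \<omega> \<partial>M) \<ge> 0"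
    using nonneg by simp_all
  ultimately show ?thesis
    using p by (simp add: Exc_def Exc_pow_def Lnorm_def powr_powr)
qed

lemma (in prob_space) Exc_pow_nonneg:
  fixes X :: "'a \<Rightarrow> real"
  assumes p: "p > 1" and \<theta>: "\<theta> \<in> {0..1}"
    and X: "X \<in> borel_measurable M" "\<And>\<omega>. \<omega> \<in> space M \<Longrightarrow> X \<omega> \<ge> 0"
    and int: "integrable M (\<lambda>\<omega>. X \<omega> powr p)"
  shows "0 \<le> Exc_pow M p \<theta> X"
proof -
  have "\<theta> powr p \<le> 1" using \<theta> p by (auto intro: powr_le1)
  then have "\<theta> powr p * (\<integral>\<omega>. X \<omega> \<partial>M) powr p \<le> (\<integral>\<omega>. X \<omega> \<partial>M) powr p"
    by (intro mult_left_le_one_le) auto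
  also have "\<dots> \<le> (\<integral>\<omega>. X \<omega> powr p \<partial>M)"
    by (rule powr_integral_le_integral_powr[OF p X int])
  finally show ?thesis by (simp add: Exc_pow_def)
qed

lemma (in prob_space) integral_bregman_powr_ge_tangent:
  fixes X Y :: "'a \<Rightarrow> real"
  assumes p: "1 < p" "p \<le> 2" and meas: "X \<in> borel_measurable M" "Y \<in> borel_measurable M"
    and nonneg: "\<And>\<omega>. \<omega> \<in> space M \<Longrightarrow> X \<omega> \<ge> 0 \<and> Y \<omega> \<ge> 0"
    and int: "integrable M (\<lambda>\<omega>. X \<omega> powr p)" "integrable M (\<lambda>\<omega>. Y \<omega> powr p)"
      "integrable M X" "integrable M Y"
    and pos: "(\<integral>\<omega>. X \<omega> \<partial>M) > 0" "(\<integral>\<omega>. Y \<omega> \<partial>M) > 0"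
  shows "bregman_powr p (\<integral>\<omega>. Y \<omega> \<partial>M) (\<integral>\<omega>. X \<omega> \<partial>M) \<le> (\<integral>\<omega>. bregman_powr p (Y \<omega>) (X \<omega>) \<partial>M)"
proof -
  define a where "a = (\<integral>\<omega>. X \<omega> \<partial>M)"
  define b where "b = (\<integral>\<omega>. Y \<omega> \<partial>M)"
  define g1 where "g1 = p * (b powr (p - 1) - a powr (p - 1))"
  define g2 where "g2 = p * (p - 1) * (a powr (p - 1) - a powr (p - 2) * b)"
  have "bregman_powr p b a = (\<integral>\<omega>. bregman_powr p b a + g1 * (Y \<omega> - b) + g2 * (X \<omega> - a) \<partial>M)"
    using int(3,4) by (simp add: prob_space flip: a_def b_def)
  also have "\<dots> \<le> (\<integral>\<omega>. bregman_powr p (Y \<omega>) (X \<omega>) \<partial>M)"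
    using int pos p nonneg integrable_bregman_powr[OF _ meas nonneg int(1,2)] unfolding g1_def g2_def
    by (intro integral_mono bregman_powr_above_tangent) (auto simp: mult_ac a_def b_def)
  finally show ?thesis by (simp add: a_def b_def)
qed

lemma (in prob_space) bregman_powr_integral_le_integral_bregman_powr:
  fixes X Y :: "'a \<Rightarrow> real"
  assumes p: "1 < p" "p \<le> 2" and meas: "X \<in> borel_measurable M" "Y \<in> borel_measurable M"
    and nonneg: "\<And>\<omega>. \<omega> \<in> space M \<Longrightarrow> X \<omega> \<ge> 0 \<and> Y \<omega> \<ge> 0"
    and int: "integrable M (\<lambda>\<omega>. X \<omega> powr p)" "integrable M (\<lambda>\<omega>. Y \<omega> powr p)"
  shows "bregman_powr p (\<integral>\<omega>. Y \<omega> \<partial>M) (\<integral>\<omega>. X \<omega> \<partial>M) \<le> (\<integral>\<omega>. bregman_powr p (Y \<omega>) (X \<omega>) \<partial>M)"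
proof -
  define a where "a = (\<integral>\<omega>. X \<omega> \<partial>M)"
  define b where "b = (\<integral>\<omega>. Y \<omega> \<partial>M)"
  have int1: "integrable M X" "integrable M Y"
    using p meas nonneg int by (auto intro!: integrable_of_integrable_powr[of p])
  have int_bregman: "integrable M (\<lambda>\<omega>. bregman_powr p (Y \<omega>) (X \<omega>))"
    using p by (intro integrable_bregman_powr[OF _ meas nonneg int]) auto
  have "a \<ge> 0" "b \<ge> 0" using nonneg by (simp_all add: a_def b_def)
  then consider "a = 0" | "b = 0" | "a > 0" "b > 0" by fastforce
  then show ?thesis
  proof cases
    case 1
    then have "AE \<omega> in M. X \<omega> = 0"
      using int1 nonneg by (subst integral_nonneg_eq_0_iff_AE[symmetric]) (auto simp: a_def)
    then have "(\<integral>\<omega>. bregman_powr p (Y \<omega>) (X \<omega>) \<partial>M) = (\<integral>\<omega>. Y \<omega> powr p \<partial>M)"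
      using borel_measurable_integrable[OF int_bregman] borel_measurable_integrable[OF int(2)]
      by (intro integral_cong_AE) (auto simp: bregman_powr_def)
    moreover have "b powr p \<le> (\<integral>\<omega>. Y \<omega> powr p \<partial>M)"
      unfolding b_def using p meas nonneg int by (intro powr_integral_le_integral_powr) auto
    ultimately show ?thesis using 1 by (simp add: bregman_powr_def flip: a_def b_def)
  next
    case 2
    then have "AE \<omega> in M. Y \<omega> = 0"
      using int1 nonneg by (subst integral_nonneg_eq_0_iff_AE[symmetric]) (auto simp: b_def)
    then have "(\<integral>\<omega>. bregman_powr p (Y \<omega>) (X \<omega>) \<partial>M) = (\<integral>\<omega>. (p - 1) * X \<omega> powr p \<partial>M)"
      using borel_measurable_integrable[OF int_bregman] borel_measurable_integrable[OF int(1)]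
      by (intro integral_cong_AE) (auto simp: bregman_powr_def)
    moreover have "a powr p \<le> (\<integral>\<omega>. X \<omega> powr p \<partial>M)"
      unfolding a_def using p meas nonneg int by (intro powr_integral_le_integral_powr) auto
    ultimately show ?thesis using 2 p by (simp add: bregman_powr_def flip: a_def b_def)
  next
    case 3
    then show ?thesis
      using integral_bregman_powr_ge_tangent[OF p meas nonneg int int1] by (simp add: a_def b_def)
  qed
qed

lemma (in prob_space) Cov_Young:
  fixes X Y :: "'a \<Rightarrow> real"
  assumes p: "1 < p" "p \<le> 2" and \<theta>: "\<theta> \<in> {0..1}"
    and meas: "X \<in> borel_measurable M" "Y \<in> borel_measurable M"
    and nonneg: "\<And>\<omega>. \<omega> \<in> space M \<Longrightarrow> X \<omega> \<ge> 0 \<and> Y \<omega> \<ge> 0"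
    and int: "integrable M (\<lambda>\<omega>. X \<omega> powr p)" "integrable M (\<lambda>\<omega>. Y \<omega> powr p)"
  shows "p * Cov M p \<theta> X Y \<le> Exc_pow M p \<theta> Y + (p - 1) * Exc_pow M p \<theta> X"
proof -
  define a where "a = (\<integral>\<omega>. X \<omega> \<partial>M)"
  define b where "b = (\<integral>\<omega>. Y \<omega> \<partial>M)"
  have "\<theta> powr p \<le> 1" using \<theta> p by (auto intro: powr_le1)
  moreover have "0 \<le> bregman_powr p b a"
    using p nonneg by (intro bregman_powr_nonneg) (auto simp: a_def b_def)
  ultimately have "\<theta> powr p * bregman_powr p b a \<le> bregman_powr p b a"
    by (intro mult_left_le_one_le) auto
  also have "\<dots> \<le> (\<integral>\<omega>. bregman_powr p (Y \<omega>) (X \<omega>) \<partial>M)"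
    unfolding a_def b_def by (rule bregman_powr_integral_le_integral_bregman_powr[OF p meas nonneg int])
  also have "\<dots> = (\<integral>\<omega>. Y \<omega> powr p \<partial>M) + (p - 1) * (\<integral>\<omega>. X \<omega> powr p \<partial>M)
      - p * (\<integral>\<omega>. X \<omega> powr (p - 1) * Y \<omega> \<partial>M)"
    using p by (intro integral_bregman_powr[OF _ meas nonneg int]) auto
  finally show ?thesis
    by (simp add: Cov_def Exc_pow_def bregman_powr_def algebra_simps flip: a_def b_def)
qed

lemma young_scaling_bound:
  fixes p A B C :: real
  assumes p: "p > 1" and A: "A \<ge> 0" and B: "B \<ge> 0"
    and young: "\<And>l. l > 0 \<Longrightarrow> p * (l * C) \<le> l powr p * B + (p - 1) * A"
  shows "C \<le> (A powr (1 / p)) powr (p - 1) * B powr (1 / p)"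
proof (cases "A > 0 \<and> B > 0")
  case True
  define l where "l = (A / B) powr (1 / p)"
  have l: "l > 0" "l powr p = A / B" using True p by (simp_all add: l_def powr_powr)
  then have "p * (l * C) \<le> p * A" using young[of l] True by (simp add: algebra_simps)
  then have "C \<le> A / l" using l p by (simp add: field_simps)
  also have "A / l = A powr 1 / A powr (1 / p) * B powr (1 / p)"
    using True by (simp add: l_def powr_divide)
  also have "A powr 1 / A powr (1 / p) = A powr (1 - 1 / p)"
    by (rule powr_diff[symmetric])
  also have "1 - 1 / p = 1 / p * (p - 1)" using p by (simp add: field_simps)
  finally show ?thesis by (simp add: powr_powr)
next
  case False
  then have rhs: "(A powr (1 / p)) powr (p - 1) * B powr (1 / p) = 0"
    using A B by auto
  show ?thesis
  proof (rule ccontr)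
    assume "\<not> ?thesis"
    then have C: "C > 0" using rhs by simp
    show False
    proof (cases "B = 0")
      case True
      define l where "l = ((p - 1) * A + 1) / (p * C)"
      have "(p - 1) * A \<ge> 0" using p A by simp
      then have "l > 0" using C p unfolding l_def by (intro divide_pos_pos) auto
      moreover have "p * (l * C) = (p - 1) * A + 1" using C p by (simp add: l_def)
      ultimately show False using young[of l] True by simp
    next
      case False
      then have "A = 0" "B > 0" using \<open>\<not> (A > 0 \<and> B > 0)\<close> A B by auto
      define l where "l = (p * C / (2 * B)) powr (1 / (p - 1))"
      have l: "l > 0" using C p \<open>B > 0\<close> by (simp add: l_def)
      have "l powr (p - 1) * B = p * C / 2" using C p \<open>B > 0\<close> by (simp add: l_def powr_powr)
      moreover have "l powr p = l * l powr (p - 1)" using powr_mult_base[of l "p - 1"] l by simp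
      ultimately have "l powr p * B = l * (p * C) / 2" by simp
      then have "p * (l * C) \<le> p * (l * C) / 2" using young[OF l] \<open>A = 0\<close> by (simp add: mult_ac)
      moreover have "p * (l * C) > 0" using l p C by simp
      ultimately show False by linarith
    qed
  qed
qed

lemma Cov_scale_right: "Cov M p \<theta> X (\<lambda>\<omega>. l * Y \<omega>) = l * Cov M p \<theta> X Y"
  by (simp add: Cov_def algebra_simps)

lemma Exc_pow_scale:
  fixes Y :: "'a \<Rightarrow> real"
  assumes l: "l \<ge> 0" and nonneg: "\<And>\<omega>. \<omega> \<in> space M \<Longrightarrow> Y \<omega> \<ge> 0"
  shows "Exc_pow M p \<theta> (\<lambda>\<omega>. l * Y \<omega>) = l powr p * Exc_pow M p \<theta> Y"
proof -
  have "(\<integral>\<omega>. (l * Y \<omega>) powr p \<partial>M) = (\<integral>\<omega>. l powr p * Y \<omega> powr p \<partial>M)"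
    using l nonneg by (intro Bochner_Integration.integral_cong) (auto simp: powr_mult)
  moreover have "(l * (\<integral>\<omega>. Y \<omega> \<partial>M)) powr p = l powr p * (\<integral>\<omega>. Y \<omega> \<partial>M) powr p"
    using l nonneg by (simp add: powr_mult)
  ultimately show ?thesis by (simp add: Exc_pow_def algebra_simps)
qed

lemma (in prob_space) Exc_scale:
  fixes Y :: "'a \<Rightarrow> real"
  assumes p: "p > 1" and \<theta>: "\<theta> \<in> {0..1}" and l: "l \<ge> 0"
    and Y: "Y \<in> borel_measurable M" "\<And>\<omega>. \<omega> \<in> space M \<Longrightarrow> Y \<omega> \<ge> 0"
    and int: "integrable M (\<lambda>\<omega>. Y \<omega> powr p)"
  shows "Exc M p \<theta> (\<lambda>\<omega>. l * Y \<omega>) = l * Exc M p \<theta> Y"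
proof -
  have "0 \<le> Exc_pow M p \<theta> Y" by (rule Exc_pow_nonneg[OF p \<theta> Y int])
  then show ?thesis
    using p l Y(2) by (simp add: Exc_eq_Exc_pow Exc_pow_scale powr_mult powr_powr)
qed

text \<open>As in the classical derivation of Holder's inequality from Young's: apply
  \<open>Cov_Young\<close> to \<open>l * Y\<close> and optimise over \<open>l > 0\<close>.\<close>
lemma (in prob_space) Cov_le_Exc:
  fixes X Y :: "'a \<Rightarrow> real"
  assumes p: "1 < p" "p \<le> 2" and \<theta>: "\<theta> \<in> {0..1}"
    and meas: "X \<in> borel_measurable M" "Y \<in> borel_measurable M"
    and nonneg: "\<And>\<omega>. \<omega> \<in> space M \<Longrightarrow> X \<omega> \<ge> 0 \<and> Y \<omega> \<ge> 0"
    and int: "integrable M (\<lambda>\<omega>. X \<omega> powr p)" "integrable M (\<lambda>\<omega>. Y \<omega> powr p)"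
  shows "Cov M p \<theta> X Y \<le> Exc M p \<theta> X powr (p - 1) * Exc M p \<theta> Y"
proof -
  have "Cov M p \<theta> X Y \<le> (Exc_pow M p \<theta> X powr (1 / p)) powr (p - 1) * Exc_pow M p \<theta> Y powr (1 / p)"
  proof (rule young_scaling_bound)
    show "0 \<le> Exc_pow M p \<theta> X" "0 \<le> Exc_pow M p \<theta> Y"
      using p \<theta> meas nonneg int by (auto intro!: Exc_pow_nonneg)
    fix l :: real assume l: "l > 0"
    have "integrable M (\<lambda>\<omega>. (l * Y \<omega>) powr p) \<longleftrightarrow> integrable M (\<lambda>\<omega>. l powr p * Y \<omega> powr p)"
      using l nonneg by (intro Bochner_Integration.integrable_cong) (auto simp: powr_mult)
    then have "integrable M (\<lambda>\<omega>. (l * Y \<omega>) powr p)" using int(2) by simp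
    moreover have "(\<lambda>\<omega>. l * Y \<omega>) \<in> borel_measurable M" using meas(2) by simp
    ultimately have "p * Cov M p \<theta> X (\<lambda>\<omega>. l * Y \<omega>)
        \<le> Exc_pow M p \<theta> (\<lambda>\<omega>. l * Y \<omega>) + (p - 1) * Exc_pow M p \<theta> X"
      using l nonneg by (intro Cov_Young[OF p \<theta> meas(1) _ _ int(1)]) auto
    then show "p * (l * Cov M p \<theta> X Y) \<le> l powr p * Exc_pow M p \<theta> Y + (p - 1) * Exc_pow M p \<theta> X"
      using l nonneg by (simp add: Cov_scale_right Exc_pow_scale)
  qed (use p in simp)
  then show ?thesis using p nonneg by (simp add: Exc_eq_Exc_pow)
qed

lemma powr_add_le_two_powr:
  fixes x y p :: real
  assumes "x \<ge> 0" "y \<ge> 0" "p > 0"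
  shows "(x + y) powr p \<le> 2 powr p * (x powr p + y powr p)"
proof -
  have "(x + y) powr p \<le> (2 * max x y) powr p" using assms by (intro powr_mono2) auto
  also have "\<dots> = 2 powr p * max x y powr p" using assms by (simp add: powr_mult)
  also have "max x y powr p \<le> x powr p + y powr p" by (simp add: max_def)
  finally show ?thesis by simp
qed

lemma Exc_pow_add_eq_Cov:
  fixes X Y :: "'a \<Rightarrow> real"
  defines "Z \<equiv> \<lambda>\<omega>. X \<omega> + Y \<omega>"
  assumes nonneg: "\<And>\<omega>. \<omega> \<in> space M \<Longrightarrow> Z \<omega> \<ge> 0"
    and int: "integrable M X" "integrable M Y"
      "integrable M (\<lambda>\<omega>. Z \<omega> powr (p - 1) * X \<omega>)" "integrable M (\<lambda>\<omega>. Z \<omega> powr (p - 1) * Y \<omega>)"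
  shows "Exc_pow M p \<theta> Z = Cov M p \<theta> Z X + Cov M p \<theta> Z Y"
proof -
  have "(\<integral>\<omega>. Z \<omega> powr p \<partial>M) = (\<integral>\<omega>. Z \<omega> powr (p - 1) * X \<omega> + Z \<omega> powr (p - 1) * Y \<omega> \<partial>M)"
  proof (intro Bochner_Integration.integral_cong)
    fix \<omega> assume "\<omega> \<in> space M"
    then have "Z \<omega> powr p = Z \<omega> * Z \<omega> powr (p - 1)"
      using nonneg powr_mult_base[of "Z \<omega>" "p - 1"] by simp
    then show "Z \<omega> powr p = Z \<omega> powr (p - 1) * X \<omega> + Z \<omega> powr (p - 1) * Y \<omega>"
      by (simp add: Z_def algebra_simps)
  qed simp
  moreover have "(\<integral>\<omega>. Z \<omega> \<partial>M) = (\<integral>\<omega>. X \<omega> \<partial>M) + (\<integral>\<omega>. Y \<omega> \<partial>M)"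
    using int by (simp add: Z_def)
  moreover have "(\<integral>\<omega>. Z \<omega> \<partial>M) powr p = (\<integral>\<omega>. Z \<omega> \<partial>M) powr (p - 1) * (\<integral>\<omega>. Z \<omega> \<partial>M)"
    using nonneg powr_mult_base[of "\<integral>\<omega>. Z \<omega> \<partial>M" "p - 1"] by (simp add: mult.commute)
  ultimately show ?thesis
    using int by (simp add: Exc_pow_def Cov_def algebra_simps)
qed

lemma (in prob_space) Exc_add_le:
  fixes X Y :: "'a \<Rightarrow> real"
  assumes p: "1 < p" "p \<le> 2" and \<theta>: "\<theta> \<in> {0..1}"
    and meas: "X \<in> borel_measurable M" "Y \<in> borel_measurable M"
    and nonneg: "\<And>\<omega>. \<omega> \<in> space M \<Longrightarrow> X \<omega> \<ge> 0 \<and> Y \<omega> \<ge> 0"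
    and int: "integrable M (\<lambda>\<omega>. X \<omega> powr p)" "integrable M (\<lambda>\<omega>. Y \<omega> powr p)"
  shows "Exc M p \<theta> (\<lambda>\<omega>. X \<omega> + Y \<omega>) \<le> Exc M p \<theta> X + Exc M p \<theta> Y"
proof -
  define Z where "Z = (\<lambda>\<omega>. X \<omega> + Y \<omega>)"
  have Z: "Z \<in> borel_measurable M" "\<And>\<omega>. \<omega> \<in> space M \<Longrightarrow> Z \<omega> \<ge> 0"
    using meas nonneg by (auto simp: Z_def)
  have int_Z: "integrable M (\<lambda>\<omega>. Z \<omega> powr p)"
  proof (rule Bochner_Integration.integrable_bound)
    show "integrable M (\<lambda>\<omega>. 2 powr p * (X \<omega> powr p + Y \<omega> powr p))" using int by simp
    show "AE \<omega> in M. norm (Z \<omega> powr p) \<le> norm (2 powr p * (X \<omega> powr p + Y \<omega> powr p))"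
      using nonneg p by (intro AE_I2) (auto simp: Z_def powr_add_le_two_powr)
  qed (use Z in measurable)
  have nonneg_ZX: "\<And>\<omega>. \<omega> \<in> space M \<Longrightarrow> Z \<omega> \<ge> 0 \<and> X \<omega> \<ge> 0"
    and nonneg_ZY: "\<And>\<omega>. \<omega> \<in> space M \<Longrightarrow> Z \<omega> \<ge> 0 \<and> Y \<omega> \<ge> 0"
    using Z nonneg by auto
  define n where "n = Exc M p \<theta> Z"
  have n: "n \<ge> 0" "n powr p = Exc_pow M p \<theta> Z"
    using p \<theta> Z int_Z by (simp_all add: n_def Exc_eq_Exc_pow powr_powr Exc_pow_nonneg)
  have "integrable M X" "integrable M Y"
    using p meas nonneg int by (auto intro!: integrable_of_integrable_powr[of p])
  moreover have "integrable M (\<lambda>\<omega>. Z \<omega> powr (p - 1) * X \<omega>)" "integrable M (\<lambda>\<omega>. Z \<omega> powr (p - 1) * Y \<omega>)"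
    using p(1) Z(1) meas nonneg_ZX nonneg_ZY int_Z int by (auto intro!: integrable_powr_mult)
  ultimately have "Exc_pow M p \<theta> Z = Cov M p \<theta> Z X + Cov M p \<theta> Z Y"
    using Z(2) unfolding Z_def by (intro Exc_pow_add_eq_Cov)
  then have "n powr (p - 1) * n = Cov M p \<theta> Z X + Cov M p \<theta> Z Y"
    using n powr_mult_base[OF n(1), of "p - 1"] by (simp add: mult.commute)
  also have "\<dots> \<le> n powr (p - 1) * Exc M p \<theta> X + n powr (p - 1) * Exc M p \<theta> Y"
    unfolding n_def using p \<theta> Z meas nonneg_ZX nonneg_ZY int_Z int
    by (intro add_mono Cov_le_Exc) auto
  finally have "n powr (p - 1) * n \<le> n powr (p - 1) * (Exc M p \<theta> X + Exc M p \<theta> Y)"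
    by (simp add: algebra_simps)
  then have "n \<le> Exc M p \<theta> X + Exc M p \<theta> Y"
    using n(1) by (cases "n = 0") (auto simp: mult_le_cancel_left Exc_def)
  then show ?thesis by (simp add: n_def Z_def)
qed

definition two_point :: "real measure" where
  "two_point = measure_pmf (pmf_of_set {0, 1})"

lemma prob_space_two_point: "prob_space two_point"
  unfolding two_point_def by (rule prob_space_measure_pmf)

lemma integral_two_point: "(\<integral>\<omega>. f \<omega> \<partial>two_point) = (f 0 + f 1) / (2::real)"
  unfolding two_point_def by (subst integral_measure_pmf_real[of "{0, 1}"]) auto

lemma admissible_two_point:
  assumes "\<And>\<omega>. X \<omega> \<ge> 0" "\<And>\<omega>. Y \<omega> \<ge> 0"
  shows "admissible two_point p q X Y"
proof -
  have "Lnorm_finite two_point r f" for r and f :: "real \<Rightarrow> real"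
  proof -
    have "integrable two_point (\<lambda>x. \<bar>f x\<bar> powr r)"
      unfolding two_point_def by (rule integrable_measure_pmf_finite) simp
    then show ?thesis
      by (auto simp: Lnorm_finite_def two_point_def less_top dest: integrableD)
  qed
  then show ?thesis
    using assms prob_space_two_point by (simp add: admissible_def)
qed

lemma Exc_pow_two_point:
  "Exc_pow two_point p \<theta> X = (X 0 powr p + X 1 powr p) / 2 - \<theta> powr p * ((X 0 + X 1) / 2) powr p"
  by (simp add: Exc_pow_def integral_two_point)

lemma Cov_two_point:
  "Cov two_point p \<theta> X Y = (X 0 powr (p - 1) * Y 0 + X 1 powr (p - 1) * Y 1) / 2
     - \<theta> powr p * ((X 0 + X 1) / 2) powr (p - 1) * ((Y 0 + Y 1) / 2)"
  by (simp add: Cov_def integral_two_point)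

lemma powr_diff_ge_tangent:
  fixes G d p :: real
  assumes p: "p > 1" and d: "0 \<le> d" "d \<le> G"
  shows "G powr (p - 1) * (G - p * d) \<le> (G - d) powr p"
proof -
  have "0 \<le> bregman_powr p (G - d) G"
    using p d by (intro bregman_powr_nonneg) auto
  moreover have "G powr p = G * G powr (p - 1)"
    using d powr_mult_base[of G "p - 1"] by simp
  ultimately show ?thesis by (simp add: bregman_powr_def algebra_simps)
qed

lemma powr_perturbation_excess_lt:
  fixes p k \<epsilon> :: real
  assumes p: "p \<ge> 2" and k: "k > 0" and \<epsilon>: "\<epsilon> > 0"
    and small: "\<epsilon> powr (p - 2) \<le> k * p * (p - 1) / 2"
  shows "(1 + \<epsilon> powr p) / 2 - k * (1 + \<epsilon>) powr p < 1 / 2 - k - k * p * \<epsilon>"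
proof -
  define gap where "gap = k * p * (p - 1) / 2 * \<epsilon>\<^sup>2"
  have "k * (1 + p * \<epsilon> + p * (p - 1) / 2 * \<epsilon>\<^sup>2) \<le> k * (1 + \<epsilon>) powr p"
    using p \<epsilon> k by (intro mult_left_mono powr_Bernoulli_inequality_second_order) auto
  then have "k + k * p * \<epsilon> + gap \<le> k * (1 + \<epsilon>) powr p"
    by (simp add: gap_def algebra_simps)
  moreover have "\<epsilon> powr p = \<epsilon> powr (p - 2) * \<epsilon> powr 2"
    by (simp flip: powr_add)
  then have "\<epsilon> powr p \<le> gap"
    unfolding gap_def using small \<epsilon> by (simp add: powr_numeral mult_right_mono)
  moreover have "0 < gap" using k p \<epsilon> by (simp add: gap_def)
  ultimately show ?thesis by (simp add: field_simps)
qed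

lemma two_point_moments:
  fixes p \<theta> \<epsilon> t :: real
  defines "X \<equiv> \<lambda>\<omega>. if \<omega> = 0 then 1 else 0" and "Y \<equiv> \<lambda>\<omega>. if \<omega> = 0 then 1 else \<epsilon>"
    and "k \<equiv> \<theta> powr p * (1 / 2) powr p"
  assumes \<epsilon>: "\<epsilon> \<ge> 0" and t: "t \<ge> 0"
  shows "Exc_pow two_point p \<theta> X = 1 / 2 - k"
    and "Exc_pow two_point p \<theta> Y = (1 + \<epsilon> powr p) / 2 - k * (1 + \<epsilon>) powr p"
    and "Cov two_point p \<theta> X Y = 1 / 2 - k - k * \<epsilon>"
    and "Exc_pow two_point p \<theta> (\<lambda>\<omega>. X \<omega> + t * Y \<omega>) \<ge> (1 + t) powr p / 2 - k * (1 + t + t * \<epsilon>) powr p"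
proof -
  have half: "(1 / 2 :: real) powr (p - 1) * (1 / 2) = (1 / 2) powr p"
    using powr_mult_base[of "1 / 2 :: real" "p - 1"] by (simp add: mult.commute)
  have "((1 + \<epsilon>) / 2) powr p = (1 + \<epsilon>) powr p * (1 / 2) powr p"
    "((1 + t + t * \<epsilon>) / 2) powr p = (1 + t + t * \<epsilon>) powr p * (1 / 2) powr p"
    using \<epsilon> t powr_mult[of "1 + \<epsilon>" "1 / 2" p] powr_mult[of "1 + t + t * \<epsilon>" "1 / 2" p] by simp_all
  then show "Exc_pow two_point p \<theta> X = 1 / 2 - k"
    and "Exc_pow two_point p \<theta> Y = (1 + \<epsilon> powr p) / 2 - k * (1 + \<epsilon>) powr p"
    and "Exc_pow two_point p \<theta> (\<lambda>\<omega>. X \<omega> + t * Y \<omega>) \<ge> (1 + t) powr p / 2 - k * (1 + t + t * \<epsilon>) powr p"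
    using \<epsilon> t by (simp_all add: Exc_pow_two_point X_def Y_def k_def add_ac)
  have "\<theta> powr p * (1 / 2) powr (p - 1) * ((1 + \<epsilon>) / 2) = k * (1 + \<epsilon>)"
    using half by (simp add: k_def algebra_simps)
  then show "Cov two_point p \<theta> X Y = 1 / 2 - k - k * \<epsilon>"
    by (simp add: Cov_two_point X_def Y_def algebra_simps)
qed

lemma Cov_gt_Exc_two_point:
  fixes p \<theta> \<epsilon> :: real
  defines "X \<equiv> \<lambda>\<omega>. if \<omega> = 0 then 1 else 0" and "Y \<equiv> \<lambda>\<omega>. if \<omega> = 0 then 1 else \<epsilon>"
    and "k \<equiv> \<theta> powr p * (1 / 2) powr p"
  assumes p: "p > 2" and \<theta>: "\<theta> \<in> {0<..1}" and \<epsilon>: "0 < \<epsilon>" "\<epsilon> \<le> 1"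
    and small: "\<epsilon> powr (p - 2) \<le> k * p * (p - 1) / 2"
  shows "Exc two_point p \<theta> X powr (p - 1) * Exc two_point p \<theta> Y < Cov two_point p \<theta> X Y"
proof -
  define G where "G = 1 / 2 - k"
  define F where "F = Exc_pow two_point p \<theta> Y"
  note moments = two_point_moments[OF less_imp_le[OF \<epsilon>(1)] order_refl, of p \<theta>, folded X_def Y_def k_def]
  have "\<theta> powr p \<le> 1"
    using \<theta> p by (auto intro: powr_le1)
  then have "k \<le> (1 / 2) powr p"
    unfolding k_def by (intro mult_left_le_one_le) auto
  also have "(1 / 2 :: real) powr p \<le> (1 / 2) powr 2"
    using p by (intro powr_mono') auto
  finally have k: "0 < k" "k \<le> 1 / 4"
    using \<theta> by (auto simp: k_def power2_eq_square)
  have "k * \<epsilon> \<le> k" using k \<epsilon> by (simp add: mult_left_le)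
  then have k_\<epsilon>: "0 \<le> k * \<epsilon>" "k * \<epsilon> \<le> G"
    using k \<epsilon> unfolding G_def by (simp, linarith)
  have F_nonneg: "F \<ge> 0"
    using p \<theta> \<epsilon> unfolding F_def
    by (intro prob_space.Exc_pow_nonneg[OF prob_space_two_point])
      (auto simp: Y_def two_point_def integrable_measure_pmf_finite)
  \<comment> \<open>second-order expansion: the Jensen gap of order \<open>\<epsilon>\<^sup>2\<close> beats \<open>\<epsilon> powr p\<close>\<close>
  have "F < G - k * p * \<epsilon>"
    using p k \<epsilon> small powr_perturbation_excess_lt[of p k \<epsilon>] moments(2) by (simp add: F_def G_def)
  then have "G powr (p - 1) * F < G powr (p - 1) * (G - k * p * \<epsilon>)"
    using k by (simp add: G_def)
  also have "\<dots> \<le> (G - k * \<epsilon>) powr p"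
    using powr_diff_ge_tangent[OF _ k_\<epsilon>, of p] p by (simp add: mult_ac)
  finally have "(G powr (p - 1) * F) powr (1 / p) < ((G - k * \<epsilon>) powr p) powr (1 / p)"
    using k F_nonneg p by (intro powr_less_mono2) (auto simp: G_def)
  moreover have "Exc two_point p \<theta> X = G powr (1 / p)" "Exc two_point p \<theta> Y = F powr (1 / p)"
    using p \<epsilon> moments(1) by (simp_all add: Exc_eq_Exc_pow X_def Y_def F_def G_def)
  ultimately show ?thesis
    using k k_\<epsilon> F_nonneg p moments(3)
    by (simp add: G_def powr_powr powr_mult mult.commute diff_diff_eq)
qed

text \<open>At \<open>t = 0\<close> the derivative of \<open>Exc (X + t Y) powr p\<close> is \<open>p * Cov X Y\<close> and that of
  \<open>(Exc X + t Exc Y) powr p\<close> is \<open>p * Exc X powr (p - 1) * Exc Y\<close>, so the failure of the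
  covariance inequality makes the triangle inequality fail for small \<open>t\<close>.\<close>
lemma Exc_add_gt_two_point:
  fixes p \<theta> \<epsilon> :: real
  defines "X \<equiv> \<lambda>\<omega>. if \<omega> = 0 then 1 else 0" and "Y \<equiv> \<lambda>\<omega>. if \<omega> = 0 then 1 else \<epsilon>"
  assumes p: "p > 1" and \<theta>: "\<theta> \<in> {0<..1}" and \<epsilon>: "\<epsilon> \<ge> 0"
    and Cov_gt: "Exc two_point p \<theta> X powr (p - 1) * Exc two_point p \<theta> Y < Cov two_point p \<theta> X Y"
  shows "\<exists>t > 0. Exc two_point p \<theta> X + Exc two_point p \<theta> (\<lambda>\<omega>. t * Y \<omega>)
    < Exc two_point p \<theta> (\<lambda>\<omega>. X \<omega> + t * Y \<omega>)"
proof -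
  define k where "k = \<theta> powr p * (1 / 2) powr p"
  define NX where "NX = Exc two_point p \<theta> X"
  define NY where "NY = Exc two_point p \<theta> Y"
  note moments = two_point_moments[OF \<epsilon>, of _ p \<theta>, folded X_def Y_def k_def]
  have "\<theta> powr p \<le> 1" using \<theta> p by (auto intro: powr_le1)
  then have "k \<le> (1 / 2) powr p"
    unfolding k_def by (intro mult_left_le_one_le) auto
  also have "(1 / 2 :: real) powr p < (1 / 2) powr 1"
    using p by (intro powr_less_mono') auto
  finally have NX: "NX > 0" "NX powr p = 1 / 2 - k"
    using p \<epsilon> moments(1)[OF order_refl] by (simp_all add: NX_def Exc_eq_Exc_pow X_def powr_powr)
  have NY: "NY \<ge> 0" by (simp add: NY_def Exc_def)
  have Exc_tY: "Exc two_point p \<theta> (\<lambda>\<omega>. t * Y \<omega>) = t * NY" if "t \<ge> 0" for t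
    unfolding NY_def using p \<theta> \<epsilon> that
    by (intro prob_space.Exc_scale[OF prob_space_two_point])
      (auto simp: Y_def two_point_def integrable_measure_pmf_finite)
  define g where "g t = (NX + t * NY) powr p - (1 + t) powr p / 2 + k * (1 + t + t * \<epsilon>) powr p" for t
  define D where "D = p * (NX + 0 * NY) powr (p - 1) * (0 + 1 * NY) - p * (1 + 0) powr (p - 1) * (0 + 1) / 2
      + k * (p * (1 + 0 + 0 * \<epsilon>) powr (p - 1) * (0 + 1 + (0 * 0 + 1 * \<epsilon>)))"
  have "(g has_real_derivative D) (at 0)"
    unfolding g_def D_def by (rule derivative_eq_intros refl | simp add: NX)+
  moreover have "D = p * (NX powr (p - 1) * NY - Cov two_point p \<theta> X Y)"
    by (simp add: D_def moments(3)[OF order_refl] algebra_simps)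
  then have "D < 0" using Cov_gt p by (simp add: NX_def NY_def mult_less_0_iff)
  ultimately obtain d where d: "d > 0" "\<And>h. 0 < h \<Longrightarrow> h < d \<Longrightarrow> g h < g 0"
    using DERIV_neg_dec_right by (metis add_0)
  define t where "t = d / 2"
  have "g 0 = 0" using NX by (simp add: g_def)
  then have t: "t > 0" "g t < 0" using d by (auto simp: t_def)
  then have "(NX + t * NY) powr p < Exc_pow two_point p \<theta> (\<lambda>\<omega>. X \<omega> + t * Y \<omega>)"
    using moments(4)[of t] t by (simp add: g_def X_def Y_def)
  then have "((NX + t * NY) powr p) powr (1 / p)
      < Exc_pow two_point p \<theta> (\<lambda>\<omega>. X \<omega> + t * Y \<omega>) powr (1 / p)"
    using p by (intro powr_less_mono2) auto
  then have "NX + t * NY < Exc_pow two_point p \<theta> (\<lambda>\<omega>. X \<omega> + t * Y \<omega>) powr (1 / p)"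
    using NX NY t p by (simp add: powr_powr)
  moreover have "Exc two_point p \<theta> (\<lambda>\<omega>. X \<omega> + t * Y \<omega>)
      = Exc_pow two_point p \<theta> (\<lambda>\<omega>. X \<omega> + t * Y \<omega>) powr (1 / p)"
    using t p \<epsilon> by (intro Exc_eq_Exc_pow) (auto simp: X_def Y_def)
  ultimately show ?thesis
    using t Exc_tY[of t] by (intro exI[of _ t]) (simp add: NX_def)
qed

lemma admissibleD:
  assumes "admissible M p q X Y"
  shows "prob_space M" and "X \<in> borel_measurable M" "Y \<in> borel_measurable M"
    and "\<And>\<omega>. \<omega> \<in> space M \<Longrightarrow> X \<omega> \<ge> 0 \<and> Y \<omega> \<ge> 0"
    and "integrable M (\<lambda>\<omega>. X \<omega> powr p)" "integrable M (\<lambda>\<omega>. Y \<omega> powr p)"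
proof -
  have *: "integrable M (\<lambda>\<omega>. W \<omega> powr p)"
    if "Lnorm_finite M p W" "\<And>\<omega>. \<omega> \<in> space M \<Longrightarrow> W \<omega> \<ge> 0" for W :: "_ \<Rightarrow> real"
  proof -
    have "integrable M (\<lambda>\<omega>. \<bar>W \<omega>\<bar> powr p)"
      using that(1) by (intro integrableI_nonneg) (auto simp: Lnorm_finite_def)
    moreover have "integrable M (\<lambda>\<omega>. \<bar>W \<omega>\<bar> powr p) \<longleftrightarrow> integrable M (\<lambda>\<omega>. W \<omega> powr p)"
      using that(2) by (intro Bochner_Integration.integrable_cong) auto
    ultimately show ?thesis by simp
  qed
  show "prob_space M" "X \<in> borel_measurable M" "Y \<in> borel_measurable M"
    "\<And>\<omega>. \<omega> \<in> space M \<Longrightarrow> X \<omega> \<ge> 0 \<and> Y \<omega> \<ge> 0"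
    "integrable M (\<lambda>\<omega>. X \<omega> powr p)" "integrable M (\<lambda>\<omega>. Y \<omega> powr p)"
    using assms * by (simp_all add: admissible_def Lnorm_finite_def)
qed

lemma exists_powr_le:
  fixes c r :: real
  assumes "c > 0" "r > 0"
  shows "\<exists>\<epsilon>. 0 < \<epsilon> \<and> \<epsilon> \<le> 1 \<and> \<epsilon> powr r \<le> c"
proof (intro exI conjI)
  have "min 1 (c powr (1 / r)) powr r \<le> (c powr (1 / r)) powr r"
    using assms by (intro powr_mono2) auto
  then show "min 1 (c powr (1 / r)) powr r \<le> c"
    using assms by (simp add: powr_powr)
qed (use assms in auto)

theorem theorem1:
  fixes p q :: real
  assumes "p > 1" and "q > 1" and "1 / p + 1 / q = 1"
  shows "(p \<le> 2 \<longrightarrow>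
            (\<forall>(M :: 'a measure) \<theta> X Y. \<theta> \<in> {0..1} \<and> admissible M p q X Y \<longrightarrow>
               Exc M p \<theta> (\<lambda>x. X x + Y x) \<le> Exc M p \<theta> X + Exc M p \<theta> Y \<and>
               Cov M p \<theta> X Y \<le> Exc M p \<theta> X powr (p - 1) * Exc M p \<theta> Y))
       \<and> (p > 2 \<longrightarrow>
            (\<forall>\<theta> \<in> {0<..1}.
               (\<exists>(M :: real measure) X Y. admissible M p q X Y \<and>
                  \<not> (Exc M p \<theta> (\<lambda>x. X x + Y x) \<le> Exc M p \<theta> X + Exc M p \<theta> Y)) \<and>
               (\<exists>(M :: real measure) X Y. admissible M p q X Y \<and>
                  \<not> (Cov M p \<theta> X Y \<le> Exc M p \<theta> X powr (p - 1) * Exc M p \<theta> Y))))"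
proof (rule conjI; intro impI allI ballI)
  fix M :: "'a measure" and \<theta> :: real and X Y :: "'a \<Rightarrow> real"
  assume "p \<le> 2" and "\<theta> \<in> {0..1} \<and> admissible M p q X Y"
  then have p: "1 < p" "p \<le> 2" and \<theta>: "\<theta> \<in> {0..1}" and adm: "admissible M p q X Y"
    using assms(1) by auto
  interpret prob_space M by (rule admissibleD(1)[OF adm])
  show "Exc M p \<theta> (\<lambda>x. X x + Y x) \<le> Exc M p \<theta> X + Exc M p \<theta> Y \<and>
      Cov M p \<theta> X Y \<le> Exc M p \<theta> X powr (p - 1) * Exc M p \<theta> Y"
    using Exc_add_le[OF p \<theta> admissibleD(2-6)[OF adm]] Cov_le_Exc[OF p \<theta> admissibleD(2-6)[OF adm]] by blast
next
  fix \<theta> :: real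
  assume p: "p > 2" and \<theta>: "\<theta> \<in> {0<..1}"
  obtain \<epsilon> where \<epsilon>: "0 < \<epsilon>" "\<epsilon> \<le> 1" "\<epsilon> powr (p - 2) \<le> \<theta> powr p * (1 / 2) powr p * p * (p - 1) / 2"
    using exists_powr_le[of "\<theta> powr p * (1 / 2) powr p * p * (p - 1) / 2" "p - 2"] p \<theta> by auto
  define X where "X = (\<lambda>\<omega> :: real. if \<omega> = 0 then 1 else 0 :: real)"
  define Y where "Y = (\<lambda>\<omega> :: real. if \<omega> = 0 then 1 else \<epsilon>)"
  have Cov_gt: "Exc two_point p \<theta> X powr (p - 1) * Exc two_point p \<theta> Y < Cov two_point p \<theta> X Y"
    unfolding X_def Y_def using p \<theta> \<epsilon> by (intro Cov_gt_Exc_two_point) auto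
  then obtain t where "t > 0" and
    "Exc two_point p \<theta> X + Exc two_point p \<theta> (\<lambda>\<omega>. t * Y \<omega>) < Exc two_point p \<theta> (\<lambda>\<omega>. X \<omega> + t * Y \<omega>)"
    using Exc_add_gt_two_point[of p \<theta> \<epsilon>] p \<theta> \<epsilon> unfolding X_def Y_def by auto
  moreover have "admissible two_point p q X Y" "admissible two_point p q X (\<lambda>\<omega>. t * Y \<omega>)"
    using \<epsilon> \<open>t > 0\<close> by (auto intro!: admissible_two_point simp: X_def Y_def)
  ultimately show "(\<exists>(M :: real measure) X Y. admissible M p q X Y \<and>
        \<not> (Exc M p \<theta> (\<lambda>x. X x + Y x) \<le> Exc M p \<theta> X + Exc M p \<theta> Y)) \<and>
      (\<exists>(M :: real measure) X Y. admissible M p q X Y \<and>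
        \<not> (Cov M p \<theta> X Y \<le> Exc M p \<theta> X powr (p - 1) * Exc M p \<theta> Y))"
    using Cov_gt by (auto simp: not_le)
qed

end
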